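(* Let $V$ be an $\hbar$-adic nonlocal vertex algebra and $S\subset V$ a subset such that for every positive integer $n$, $\{a+\hbar^nV:a\in S\}$ generates $V/\hbar^nV$ as a nonlocal vertex algebra (over $\mathbb{C}[\hbar]/\hbar^n\mathbb{C}[\hbar]$). Then $\langle S\rangle=V$.
   Context: A $\mathbb{C}[[\hbar]]$-module is topologically free if isomorphic to $V_0[[\hbar]]$ for some vector space $V_0$. An $\hbar$-adic nonlocal vertex algebra is a topologically free $\mathbb{C}[[\hbar]]$-module $V$ with a vector ${\bf 1}$ and a $\mathbb{C}[[\hbar]]$-linear map $Y(\cdot,x):V\to(\mathrm{End}V)[[x^{\pm1}]]$, $Y(v,x)=\sum_nv_nx^{-n-1}$, such that for each $n$ the reduction of $Y(u,x)w$ mod $\hbar^n$ lies in $(V/\hbar^nV)((x))$, $Y({\bf 1},x)=1$, $Y(v,x){\bf 1}\in V[[x]]$ with constant term $v$, and for $u,v,w\in V$ and every $n\ge1$ there is $l\ge0$ with $(z+y)^lY(u,z+y)Y(v,y)w\equiv(z+y)^lY(Y(u,z)v,y)w$ modulo $\hbar^nV[[z^{\pm1},y^{\pm1}]]$; then each $V/\hbar^nV$ is a nonlocal vertex algebra over $\mathbb{C}[\hbar]/(\hbar^n)$. For a submodule $U$, $\overline U$ denotes the $\hbar$-adic closure and $[U]=\{v:\hbar^nv\in U\text{ for some }n\}$. An $\hbar$-adic nonlocal vertex subalgebra is a $\mathbb{C}[[\hbar]]$-submodule $U$ with $[U]=U$, $\overline U=U$, ${\bf 1}\in U$ and $u_mv\in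 U$ for all $u,v\in U$, $m\in\mathbb Z$. $\langle S\rangle$ denotes the smallest $\hbar$-adic nonlocal vertex subalgebra of $V$ containing $S$ (explicitly, $\overline{[\cup_kS^{(k)}]}$ where $S^{(1)}=\mathbb{C}[[\hbar]]{\bf 1}+\mathbb{C}[[\hbar]]S$ and $S^{(k+1)}$ is the $\mathbb{C}[[\hbar]]$-span of $a_mb$, $a,b\in S^{(k)}$, $m\in\mathbb Z$). *)

theory Defs
  imports Complex_Main "HOL-Library.Function_Algebras"
    "HOL-Computational_Algebra.Formal_Power_Series"
begin

text \<open>We model a topologically free C[[h]]-module as V0[[h]] = (nat => 'a), where
  'a is a complex vector space V0 with scalar multiplication scale (locale module).
  Element x of V has h-adic coefficients x 0, x 1, ...\<close>

definition hsmul :: "(complex \<Rightarrow> 'a::ab_group_add \<Rightarrow> 'a) \<Rightarrow> complex fps \<Rightarrow> (nat \<Rightarrow> 'a) \<Rightarrow> (nat \<Rightarrow> 'a)" where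
  "hsmul scale f x = (\<lambda>k. \<Sum>i\<le>k. scale (fps_nth f i) (x (k - i)))"

definition vscale :: "(complex \<Rightarrow> 'a::ab_group_add \<Rightarrow> 'a) \<Rightarrow> complex \<Rightarrow> (nat \<Rightarrow> 'a) \<Rightarrow> (nat \<Rightarrow> 'a)" where
  "vscale scale c x = (\<lambda>k. scale c (x k))"

definition eqmod :: "nat \<Rightarrow> (nat \<Rightarrow> 'a) \<Rightarrow> (nat \<Rightarrow> 'a) \<Rightarrow> bool" where
  "eqmod n x y \<longleftrightarrow> (\<forall>k<n. x k = y k)"

text \<open>canonical representative of the class x + h^n V\<close>
definition trunc :: "nat \<Rightarrow> (nat \<Rightarrow> 'a::zero) \<Rightarrow> (nat \<Rightarrow> 'a)" where
  "trunc n x = (\<lambda>k. if k < n then x k else 0)"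

text \<open>h-adically convergent sum: coefficientwise finite sum (0 if not finite)\<close>
definition hsum :: "(nat \<Rightarrow> nat \<Rightarrow> 'a::comm_monoid_add) \<Rightarrow> (nat \<Rightarrow> 'a)" where
  "hsum F = (\<lambda>k. \<Sum>j\<in>{j. F j k \<noteq> 0}. F j k)"

text \<open>modes u v w means u_m v, i.e. Y(u,x)v = sum_m (u_m v) x^(-m-1)\<close>
definition hadic_nva ::
  "(complex \<Rightarrow> 'a::ab_group_add \<Rightarrow> 'a) \<Rightarrow> (int \<Rightarrow> (nat \<Rightarrow> 'a) \<Rightarrow> (nat \<Rightarrow> 'a) \<Rightarrow> (nat \<Rightarrow> 'a))
    \<Rightarrow> (nat \<Rightarrow> 'a) \<Rightarrow> bool" where
  "hadic_nva scale modes vac \<longleftrightarrow>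
     module scale \<and>
     \<comment> \<open>C[[h]]-bilinearity (Y is C[[h]]-linear with values in End V)\<close>
     (\<forall>m u u' w. modes m (u + u') w = modes m u w + modes m u' w) \<and>
     (\<forall>m f u w. modes m (hsmul scale f u) w = hsmul scale f (modes m u w)) \<and>
     (\<forall>m u w w'. modes m u (w + w') = modes m u w + modes m u w') \<and>
     (\<forall>m f u w. modes m u (hsmul scale f w) = hsmul scale f (modes m u w)) \<and>
     \<comment> \<open>Y(u,x)w mod h^n lies in (V/h^nV)((x))\<close>
     (\<forall>u w n. \<exists>N. \<forall>m\<ge>N. eqmod n (modes m u w) 0) \<and>
     \<comment> \<open>Y(1,x) = 1\<close>
     (\<forall>m w. modes m vac w = (if m = -1 then w else 0)) \<and>
     \<comment> \<open>Y(v,x)1 in V[[x]] with constant term v\<close>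
     (\<forall>m v. m \<ge> 0 \<longrightarrow> modes m v vac = 0) \<and>
     (\<forall>v. modes (-1) v vac = v) \<and>
     \<comment> \<open>weak associativity modulo h^n, coefficient of z^(-p-1) y^(-q-1)\<close>
     (\<forall>u v w n. n \<ge> 1 \<longrightarrow> (\<exists>l::nat. \<forall>p q::int.
        eqmod n
          (hsum (\<lambda>j. vscale scale ((of_int (int j - p - 1) :: complex) gchoose j)
                  (modes (int l + p - int j) u (modes (q + int j) v w))))
          (\<Sum>i\<le>l. vscale scale (of_nat (l choose i))
                  (modes (q + int i) (modes (int l + p - int i) u v) w))))"

definition hadic_subalg ::
  "(complex \<Rightarrow> 'a::ab_group_add \<Rightarrow> 'a) \<Rightarrow> (int \<Rightarrow> (nat \<Rightarrow> 'a) \<Rightarrow> (nat \<Rightarrow> 'a) \<Rightarrow> (nat \<Rightarrow> 'a))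
    \<Rightarrow> (nat \<Rightarrow> 'a) \<Rightarrow> (nat \<Rightarrow> 'a) set \<Rightarrow> bool" where
  "hadic_subalg scale modes vac U \<longleftrightarrow>
     \<comment> \<open>C[[h]]-submodule\<close>
     0 \<in> U \<and> (\<forall>x\<in>U. \<forall>y\<in>U. x + y \<in> U) \<and> (\<forall>f. \<forall>x\<in>U. hsmul scale f x \<in> U) \<and>
     \<comment> \<open>[U] = U\<close>
     {v. \<exists>n. hsmul scale (fps_X ^ n) v \<in> U} = U \<and>
     \<comment> \<open>closure of U equals U\<close>
     {v. \<forall>n. \<exists>u\<in>U. eqmod n v u} = U \<and>
     vac \<in> U \<and> (\<forall>u\<in>U. \<forall>v\<in>U. \<forall>m. modes m u v \<in> U)"

definition hgen ::
  "(complex \<Rightarrow> 'a::ab_group_add \<Rightarrow> 'a) \<Rightarrow> (int \<Rightarrow> (nat \<Rightarrow> 'a) \<Rightarrow> (nat \<Rightarrow> 'a) \<Rightarrow> (nat \<Rightarrow> 'a))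
    \<Rightarrow> (nat \<Rightarrow> 'a) \<Rightarrow> (nat \<Rightarrow> 'a) set \<Rightarrow> (nat \<Rightarrow> 'a) set" where
  "hgen scale modes vac S = \<Inter>{U. hadic_subalg scale modes vac U \<and> S \<subseteq> U}"

text \<open>Nonlocal vertex subalgebra of V/h^nV generated by {a + h^nV : a in S}, with
  V/h^nV represented by truncations (canonical representatives); the induced
  operations are truncations of the operations of V.\<close>
inductive_set qgen ::
  "(complex \<Rightarrow> 'a::ab_group_add \<Rightarrow> 'a) \<Rightarrow> (int \<Rightarrow> (nat \<Rightarrow> 'a) \<Rightarrow> (nat \<Rightarrow> 'a) \<Rightarrow> (nat \<Rightarrow> 'a))
    \<Rightarrow> (nat \<Rightarrow> 'a) \<Rightarrow> (nat \<Rightarrow> 'a) set \<Rightarrow> nat \<Rightarrow> (nat \<Rightarrow> 'a) set"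
  for scale modes vac S n where
  qvac: "trunc n vac \<in> qgen scale modes vac S n"
| qgen_S: "a \<in> S \<Longrightarrow> trunc n a \<in> qgen scale modes vac S n"
| qadd: "x \<in> qgen scale modes vac S n \<Longrightarrow> y \<in> qgen scale modes vac S n \<Longrightarrow>
         trunc n (x + y) \<in> qgen scale modes vac S n"
| qsmul: "x \<in> qgen scale modes vac S n \<Longrightarrow> trunc n (hsmul scale f x) \<in> qgen scale modes vac S n"
| qmodes: "x \<in> qgen scale modes vac S n \<Longrightarrow> y \<in> qgen scale modes vac S n \<Longrightarrow>
         trunc n (modes m x y) \<in> qgen scale modes vac S n"

end

theory Submission
  imports Defs
begin

text \<open>Let U be an h-adic subalgebra containing S. Since the operations of V/h^nV are
  induced by those of V, every element of the subalgebra of V/h^nV generated by S is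
  the class of an element of U. By hypothesis that subalgebra is all of V/h^nV, so
  every x \<in> V is congruent modulo h^nV to an element of U for each n, i.e. x lies in
  the h-adic closure of U, which is U itself.\<close>

lemma hsmul_fps_X_power:
  assumes "module scale"
  shows "hsmul scale (fps_X ^ n) z = (\<lambda>k. if k < n then 0 else z (k - n))"
proof
  fix k
  interpret module scale by fact
  show "hsmul scale (fps_X ^ n) z k = (if k < n then 0 else z (k - n))"
  proof (cases "k < n")
    case True
    then show ?thesis unfolding hsmul_def by (auto simp: fps_X_power_nth intro!: sum.neutral)
  next
    case False
    have "hsmul scale (fps_X ^ n) z k = (\<Sum>i\<le>k. if i = n then z (k - i) else 0)"
      unfolding hsmul_def by (intro sum.cong) (auto simp: fps_X_power_nth)
    also have "\<dots> = z (k - n)" using False by (simp add: sum.delta)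
    finally show ?thesis using False by simp
  qed
qed

lemma eqmod_iff_diff_hsmul_fps_X_power:
  assumes "module scale"
  shows "eqmod n x y \<longleftrightarrow> (\<exists>z. x - y = hsmul scale (fps_X ^ n) z)"
proof
  assume "eqmod n x y"
  then have "x - y = hsmul scale (fps_X ^ n) (\<lambda>k. (x - y) (k + n))"
    unfolding hsmul_fps_X_power[OF assms] eqmod_def by (auto simp: fun_eq_iff)
  then show "\<exists>z. x - y = hsmul scale (fps_X ^ n) z" by blast
next
  assume "\<exists>z. x - y = hsmul scale (fps_X ^ n) z"
  then obtain z where z: "x - y = hsmul scale (fps_X ^ n) z" ..
  have "(x - y) k = 0" if "k < n" for k
    using that unfolding z hsmul_fps_X_power[OF assms] by simp
  then show "eqmod n x y"
    unfolding eqmod_def by simp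
qed

lemma eqmod_additive_map:
  assumes "module scale"
    and additive: "\<And>a b. f (a + b) = f a + f b"
    and hsmul_commute: "\<And>z. f (hsmul scale (fps_X ^ n) z) = hsmul scale (fps_X ^ n) (f z)"
    and "eqmod n x y"
  shows "eqmod n (f x) (f y)"
proof -
  obtain z where z: "x - y = hsmul scale (fps_X ^ n) z"
    using assms(1,4) eqmod_iff_diff_hsmul_fps_X_power by blast
  have "f x = f y + f (x - y)"
    using additive[of y "x - y"] by simp
  then have "f x - f y = hsmul scale (fps_X ^ n) (f z)"
    using z hsmul_commute by simp
  then show ?thesis
    using assms(1) eqmod_iff_diff_hsmul_fps_X_power by blast
qed

lemma eqmod_hsmul:
  assumes "eqmod n x y"
  shows "eqmod n (hsmul scale f x) (hsmul scale f y)"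
  using assms unfolding eqmod_def hsmul_def by (auto intro!: sum.cong)

lemma eqmod_modes:
  assumes H: "hadic_nva scale modes vac" and "eqmod n x x'" and "eqmod n y y'"
  shows "eqmod n (modes m x y) (modes m x' y')"
proof -
  have "module scale" using H by (simp add: hadic_nva_def)
  have "eqmod n (modes m x y) (modes m x' y)"
    by (rule eqmod_additive_map[where f = "\<lambda>a. modes m a y", OF \<open>module scale\<close> _ _ assms(2)])
      (use H in \<open>simp_all add: hadic_nva_def\<close>)
  moreover have "eqmod n (modes m x' y) (modes m x' y')"
    by (rule eqmod_additive_map[where f = "modes m x'", OF \<open>module scale\<close> _ _ assms(3)])
      (use H in \<open>simp_all add: hadic_nva_def\<close>)
  ultimately show ?thesis by (simp add: eqmod_def)
qed

lemma eqmod_trunc: "eqmod n (trunc n x) x"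
  by (simp add: eqmod_def trunc_def)

lemma qgen_eqmod_subalg:
  assumes H: "hadic_nva scale modes vac" and U: "hadic_subalg scale modes vac U"
    and "S \<subseteq> U" and "x \<in> qgen scale modes vac S n"
  shows "\<exists>u\<in>U. eqmod n x u"
  using assms(4)
proof induction
  case qvac
  show ?case using U eqmod_trunc by (auto simp: hadic_subalg_def)
next
  case (qgen_S a)
  then show ?case using \<open>S \<subseteq> U\<close> eqmod_trunc by blast
next
  case (qadd x y)
  then obtain u v where "u \<in> U" "v \<in> U" "eqmod n x u" "eqmod n y v" by blast
  moreover have "u + v \<in> U" using U \<open>u \<in> U\<close> \<open>v \<in> U\<close> by (simp add: hadic_subalg_def)
  ultimately show ?case by (auto simp: eqmod_def trunc_def intro!: bexI[of _ "u + v"])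
next
  case (qsmul x f)
  then obtain u where "u \<in> U" "eqmod n x u" by blast
  moreover have "hsmul scale f u \<in> U" using U \<open>u \<in> U\<close> by (simp add: hadic_subalg_def)
  moreover have "eqmod n (hsmul scale f x) (hsmul scale f u)" using \<open>eqmod n x u\<close> by (rule eqmod_hsmul)
  ultimately show ?case by (auto simp: eqmod_def trunc_def intro!: bexI[of _ "hsmul scale f u"])
next
  case (qmodes x y m)
  then obtain u v where "u \<in> U" "v \<in> U" "eqmod n x u" "eqmod n y v" by blast
  moreover have "modes m u v \<in> U" using U \<open>u \<in> U\<close> \<open>v \<in> U\<close> by (simp add: hadic_subalg_def)
  moreover have "eqmod n (modes m x y) (modes m u v)"
    using H \<open>eqmod n x u\<close> \<open>eqmod n y v\<close> by (rule eqmod_modes)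
  ultimately show ?case by (auto simp: eqmod_def trunc_def intro!: bexI[of _ "modes m u v"])
qed

lemma hadic_subalg_closed:
  assumes "hadic_subalg scale modes vac U" and "\<And>n. \<exists>u\<in>U. eqmod n x u"
  shows "x \<in> U"
  using assms unfolding hadic_subalg_def by blast

theorem lemma3p17:
  fixes scale :: "complex \<Rightarrow> 'a::ab_group_add \<Rightarrow> 'a"
    and modes :: "int \<Rightarrow> (nat \<Rightarrow> 'a) \<Rightarrow> (nat \<Rightarrow> 'a) \<Rightarrow> (nat \<Rightarrow> 'a)"
    and vac :: "nat \<Rightarrow> 'a"
    and S :: "(nat \<Rightarrow> 'a) set"
  assumes "hadic_nva scale modes vac"
    and "\<forall>n::nat. n \<ge> 1 \<longrightarrow> (\<forall>x. trunc n x \<in> qgen scale modes vac S n)"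
  shows "hgen scale modes vac S = UNIV"
proof -
  have "x \<in> U" if U: "hadic_subalg scale modes vac U" and "S \<subseteq> U" for U x
  proof (rule hadic_subalg_closed[OF U])
    fix n
    show "\<exists>u\<in>U. eqmod n x u"
    proof (cases "n = 0")
      case True
      then show ?thesis using U by (auto simp: hadic_subalg_def eqmod_def)
    next
      case False
      then obtain u where "u \<in> U" "eqmod n (trunc n x) u"
        using assms qgen_eqmod_subalg[OF assms(1) U \<open>S \<subseteq> U\<close>] by (meson less_one not_le)
      then show ?thesis by (auto simp: eqmod_def trunc_def)
    qed
  qed
  then show ?thesis unfolding hgen_def by blast
qed

end
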